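(* Let $c$ be an odd positive integer and let $K$ be the set partition of $S_c$ whose only part with more than one element is the set of cyclic shifts of the identity, $\{12\cdots c,\ 23\cdots c1,\ \ldots,\ c12\cdots(c-1)\}$. Let $n>c$ be even. Then the number of even non-avoiders in $S_n$ equals the number of odd non-avoiders in $S_n$.
   Context: Permutations are written in one-line notation as words. The order permutation (standardization) of a word $u$ of distinct positive integers of length $\ell$ is the unique $\pi\in S_\ell$ with $\pi_i<\pi_j$ iff $u_i<u_j$. A hit in a permutation is a contiguous subword of length $c$ whose order permutation is a cyclic shift of the identity of $S_c$; a non-avoider is a permutation containing at least one hit. Even/odd refers to the sign of a permutation. *)

theory Defs
  imports "HOL-Combinatorics.Permutations"
begin

definition perms_n :: "nat \<Rightarrow> nat list set" where
  "perms_n n = {p. distinct p \<and> set p = {1..n}}"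

text \<open>Order permutation (standardization) of a word of distinct positive integers.\<close>
definition std :: "nat list \<Rightarrow> nat list" where
  "std u = map (\<lambda>x. card {y \<in> set u. y \<le> x}) u"

definition cyc_shifts :: "nat \<Rightarrow> nat list set" where
  "cyc_shifts c = {rotate k [1..<c+1] | k. k < c}"

text \<open>A hit: contiguous subword of length c starting at (0-based) position i whose
  order permutation is a cyclic shift of the identity of S_c.\<close>
definition is_hit :: "nat \<Rightarrow> nat list \<Rightarrow> nat \<Rightarrow> bool" where
  "is_hit c p i \<longleftrightarrow> i + c \<le> length p \<and> std (take c (drop i p)) \<in> cyc_shifts c"

definition non_avoider :: "nat \<Rightarrow> nat list \<Rightarrow> bool" where
  "non_avoider c p \<longleftrightarrow> (\<exists>i. is_hit c p i)"

definition perm_of_word :: "nat list \<Rightarrow> nat \<Rightarrow> nat" where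
  "perm_of_word p = (\<lambda>i. if 1 \<le> i \<and> i \<le> length p then p ! (i - 1) else i)"

end

theory Submission
  imports Defs
begin

text \<open>The value rotation \<open>v \<mapsto> v mod n + 1\<close> of \<open>{1..n}\<close> is an \<open>n\<close>-cycle, hence odd for even
  \<open>n\<close>, so applying it to the letters of a permutation is a sign-reversing bijection of \<open>S\<^sub>n\<close>.
  It maps hits to hits: on a window avoiding the letter \<open>n\<close> it preserves the relative order,
  and on a window containing \<open>n\<close> it turns the largest letter into the smallest, which
  rotates the values of the pattern; value rotation permutes the cyclic shifts of the
  identity. Hence only the evenness of \<open>n\<close> is needed, not the oddness of \<open>c\<close> nor \<open>n > c\<close>.\<close>

definition shift_cycle :: "nat \<Rightarrow> nat \<Rightarrow> nat" where
  "shift_cycle n v = (if 1 \<le> v \<and> v \<le> n then v mod n + 1 else v)"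

lemma shift_cycle_eq: "1 \<le> v \<Longrightarrow> v \<le> n \<Longrightarrow> shift_cycle n v = (if v = n then 1 else v + 1)"
  by (auto simp: shift_cycle_def)

lemma shift_cycle_1: "shift_cycle 1 = id"
  by (auto simp: fun_eq_iff shift_cycle_def)

lemma shift_cycle_Suc:
  "m \<ge> 1 \<Longrightarrow> shift_cycle (Suc m) = shift_cycle m \<circ> transpose m (Suc m)"
  by (auto simp: fun_eq_iff shift_cycle_def transpose_def)

lemma shift_cycle_permutes_evenperm:
  assumes "n \<ge> 1"
  shows "shift_cycle n permutes {1..n} \<and> (evenperm (shift_cycle n) \<longleftrightarrow> odd n)"
  using assms
proof (induction n rule: nat_induct_at_least)
  case base
  show ?case using shift_cycle_1 by (simp add: permutes_id id_def)
next
  case (Suc m)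
  have IH: "shift_cycle m permutes {1..Suc m}" "evenperm (shift_cycle m) \<longleftrightarrow> odd m"
    using Suc.IH permutes_subset[of _ "{1..m}" "{1..Suc m}"] by auto
  have swap: "transpose m (Suc m) permutes {1..Suc m}"
    using Suc.hyps by (simp add: permutes_swap_id)
  have "shift_cycle (Suc m) permutes {1..Suc m}"
    unfolding shift_cycle_Suc[OF Suc.hyps] by (rule permutes_compose[OF swap IH(1)])
  moreover have "evenperm (shift_cycle (Suc m)) \<longleftrightarrow> even m"
    unfolding shift_cycle_Suc[OF Suc.hyps]
    using IH(2) evenperm_comp[OF permutes_imp_permutation[OF _ IH(1)]
        permutes_imp_permutation[OF _ swap]]
    by (simp add: evenperm_swap)
  ultimately show ?case by simp
qed

lemma shift_cycle_permutes: "n \<ge> 1 \<Longrightarrow> shift_cycle n permutes {1..n}"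
  using shift_cycle_permutes_evenperm by blast

lemma evenperm_shift_cycle: "n \<ge> 1 \<Longrightarrow> evenperm (shift_cycle n) \<longleftrightarrow> odd n"
  using shift_cycle_permutes_evenperm by blast

lemma inj_shift_cycle: "inj (shift_cycle n)"
proof (cases "n = 0")
  case True
  then have "shift_cycle n = id" by (auto simp: fun_eq_iff shift_cycle_def)
  then show ?thesis by simp
next
  case False
  then show ?thesis using permutes_inj shift_cycle_permutes[of n] by simp
qed

lemma map_shift_cycle_upt: "map (shift_cycle c) [1..<c+1] = rotate1 [1..<c+1]"
proof (cases "c = 0")
  case False
  have "[1..<c+1] = [1..<c] @ [c]"
    using False upt_Suc_append[of 1 c] by simp
  then have "map (shift_cycle c) [1..<c+1] = map Suc [1..<c] @ [1]"
    using False by (auto simp: shift_cycle_def)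
  also have "\<dots> = rotate1 (1 # [Suc 1..<c+1])"
    by (simp only: map_Suc_upt rotate1.simps(2) Suc_eq_plus1)
  also have "1 # [Suc 1..<c+1] = [1..<c+1]"
    using False by (simp only: upt_conv_Cons[symmetric])
  finally show ?thesis .
qed simp

lemma map_shift_cycle_rotate:
  "map (shift_cycle c) (rotate k [1..<c+1]) = rotate (Suc k) [1..<c+1]"
  unfolding rotate_map[symmetric] map_shift_cycle_upt rotate1_rotate_swap[symmetric] rotate_Suc ..

lemma rotate_upt_mod: "rotate k [1..<c+1] = rotate (k mod c) [1..<c+1]"
  using rotate_conv_mod[of k "[1..<c+1]"] by simp

lemma cyc_shifts_eq_range: "c > 0 \<Longrightarrow> cyc_shifts c = range (\<lambda>k. rotate k [1..<c+1])"
  unfolding cyc_shifts_def using rotate_upt_mod mod_less_divisor by blast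

lemma map_shift_cycle_in_cyc_shifts_iff:
  assumes "c > 0"
  shows "map (shift_cycle c) u \<in> cyc_shifts c \<longleftrightarrow> u \<in> cyc_shifts c"
proof
  assume "map (shift_cycle c) u \<in> cyc_shifts c"
  then obtain k where k: "map (shift_cycle c) u = rotate k [1..<c+1]"
    using cyc_shifts_eq_range[OF assms] by auto
  have "rotate k [1..<c+1] = rotate (Suc (k + (c - 1))) [1..<c+1]"
    using assms rotate_upt_mod[of k c] rotate_upt_mod[of "k + c" c] by simp
  also have "\<dots> = map (shift_cycle c) (rotate (k + (c - 1)) [1..<c+1])"
    by (rule map_shift_cycle_rotate[symmetric])
  finally have "u = rotate (k + (c - 1)) [1..<c+1]"
    using k inj_map_eq_map[OF inj_shift_cycle] by metis
  then show "u \<in> cyc_shifts c"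
    using cyc_shifts_eq_range[OF assms] by simp
next
  assume "u \<in> cyc_shifts c"
  then obtain k where "u = rotate k [1..<c+1]"
    using cyc_shifts_eq_range[OF assms] by auto
  then have "map (shift_cycle c) u = rotate (Suc k) [1..<c+1]"
    by (simp only: map_shift_cycle_rotate)
  then show "map (shift_cycle c) u \<in> cyc_shifts c"
    using cyc_shifts_eq_range[OF assms] by blast
qed

lemma std_map:
  assumes "inj_on h (set w)"
  shows "std (map h w) = map (\<lambda>x. card {y \<in> set w. h y \<le> h x}) w"
proof -
  have "{z \<in> h ` set w. z \<le> h x} = h ` {y \<in> set w. h y \<le> h x}" for x
    by auto
  then show ?thesis
    by (simp add: std_def card_image inj_on_subset[OF assms])
qed

lemma std_map_mono:
  assumes "\<forall>x\<in>set w. \<forall>y\<in>set w. h y \<le> h x \<longleftrightarrow> y \<le> x"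
  shows "std (map h w) = std w"
proof -
  have "inj_on h (set w)"
    using assms by (intro inj_onI) (metis order_antisym order_refl)
  then have "std (map h w) = map (\<lambda>x. card {y \<in> set w. h y \<le> h x}) w"
    by (rule std_map)
  also have "\<dots> = std w"
    unfolding std_def
  proof (rule map_cong)
    fix x assume "x \<in> set w"
    then have "{y \<in> set w. h y \<le> h x} = {y \<in> set w. y \<le> x}"
      using assms by blast
    then show "card {y \<in> set w. h y \<le> h x} = card {y \<in> set w. y \<le> x}"
      by (rule arg_cong)
  qed simp
  finally show ?thesis .
qed

lemma std_map_shift_cycle:
  assumes "distinct w" and w_sub: "set w \<subseteq> {1..n}" and n_in: "n \<in> set w"
  shows "std (map (shift_cycle n) w) = map (shift_cycle (length w)) (std w)"
proof -
  let ?S = "set w" and ?\<sigma> = "shift_cycle n"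
  have card_S: "card ?S = length w" using assms(1) by (rule distinct_card)
  have \<sigma>_S: "?\<sigma> y = (if y = n then 1 else y + 1)" if "y \<in> ?S" for y
    using that w_sub shift_cycle_eq[of y n] by auto
  have "card {y \<in> ?S. ?\<sigma> y \<le> ?\<sigma> x} = shift_cycle (length w) (card {y \<in> ?S. y \<le> x})"
    if x: "x \<in> ?S" for x
  proof (cases "x = n")
    case True
    have "{y \<in> ?S. ?\<sigma> y \<le> ?\<sigma> x} = {n}"
      using True x n_in w_sub by (auto simp: \<sigma>_S split: if_splits)
    moreover have "{y \<in> ?S. y \<le> x} = ?S"
      using True w_sub by auto
    moreover have "shift_cycle (length w) (length w) = 1"
      using length_pos_if_in_set[OF n_in] by (simp add: shift_cycle_def Suc_le_eq)
    ultimately show ?thesis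
      using card_S by simp
  next
    case False
    let ?below = "{y \<in> ?S. y \<le> x}"
    have "x < n" using False x w_sub by force
    have "{y \<in> ?S. ?\<sigma> y \<le> ?\<sigma> x} = insert n ?below"
      using False x n_in w_sub by (auto simp: \<sigma>_S)
    moreover have "n \<notin> ?below" using \<open>x < n\<close> by simp
    moreover have "card ?below < length w"
    proof -
      have "?below \<subset> ?S" using \<open>n \<notin> ?below\<close> n_in by blast
      then show ?thesis unfolding card_S[symmetric] by (rule psubset_card_mono[OF finite_set])
    qed
    moreover have "card ?below \<ge> 1"
      using x by (auto simp: Suc_le_eq card_gt_0_iff)
    ultimately show ?thesis by (simp add: shift_cycle_def)
  qed
  then show ?thesis
    using std_map[OF inj_on_subset[OF inj_shift_cycle]] by (simp add: std_def)
qed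

lemma length_perms_n: "p \<in> perms_n n \<Longrightarrow> length p = n"
  by (auto simp: perms_n_def dest!: distinct_card)

lemma is_hit_map_shift_cycle_iff:
  assumes p: "p \<in> perms_n n" and "c > 0"
  shows "is_hit c (map (shift_cycle n) p) i \<longleftrightarrow> is_hit c p i"
proof (cases "i + c \<le> length p")
  case True
  let ?w = "take c (drop i p)"
  have "distinct ?w" and w_sub: "set ?w \<subseteq> {1..n}"
    using p by (auto simp: perms_n_def dest: in_set_takeD in_set_dropD)
  have "std (map (shift_cycle n) ?w) \<in> cyc_shifts c \<longleftrightarrow> std ?w \<in> cyc_shifts c"
  proof (cases "n \<in> set ?w")
    case True
    have "length ?w = c" using \<open>i + c \<le> length p\<close> by simp
    then show ?thesis
      using std_map_shift_cycle[OF \<open>distinct ?w\<close> w_sub True]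
        map_shift_cycle_in_cyc_shifts_iff[OF \<open>c > 0\<close>] by simp
  next
    case False
    have "\<forall>x\<in>set ?w. \<forall>y\<in>set ?w. shift_cycle n y \<le> shift_cycle n x \<longleftrightarrow> y \<le> x"
    proof (intro ballI)
      fix x y assume "x \<in> set ?w" "y \<in> set ?w"
      then have "1 \<le> x" "x < n" "1 \<le> y" "y < n"
        using False w_sub by (auto simp: order.order_iff_strict)
      then show "shift_cycle n y \<le> shift_cycle n x \<longleftrightarrow> y \<le> x"
        by (simp add: shift_cycle_def)
    qed
    then show ?thesis by (simp add: std_map_mono)
  qed
  then show ?thesis
    using True by (simp add: is_hit_def take_map drop_map)
qed (simp add: is_hit_def)

lemma non_avoider_map_shift_cycle_iff:
  "p \<in> perms_n n \<Longrightarrow> c > 0 \<Longrightarrow> non_avoider c (map (shift_cycle n) p) \<longleftrightarrow> non_avoider c p"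
  by (simp add: non_avoider_def is_hit_map_shift_cycle_iff)

lemma perm_of_word_permutes:
  assumes "p \<in> perms_n n"
  shows "perm_of_word p permutes {1..n}"
proof (rule bij_imp_permutes)
  have len: "length p = n" using assms by (rule length_perms_n)
  have "perm_of_word p ` {1..n} = (\<lambda>i. p ! i) ` {0..<n}"
    using len by (force simp: perm_of_word_def image_iff)
  also have "\<dots> = set p"
    using len by (auto simp: set_conv_nth)
  also have "\<dots> = {1..n}"
    using assms by (simp add: perms_n_def)
  finally have "perm_of_word p ` {1..n} = {1..n}" .
  then show "bij_betw (perm_of_word p) {1..n} {1..n}"
    by (simp add: bij_betw_def inj_on_iff_eq_card)
  show "perm_of_word p x = x" if "x \<notin> {1..n}" for x
    using that len by (auto simp: perm_of_word_def)
qed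

lemma perm_of_word_map:
  assumes "\<sigma> permutes {1..n}" and "p \<in> perms_n n"
  shows "perm_of_word (map \<sigma> p) = \<sigma> \<circ> perm_of_word p"
  using assms permutes_not_in[OF assms(1)] length_perms_n[OF assms(2)]
  by (auto simp: fun_eq_iff perm_of_word_def)

lemma evenperm_perm_of_word_map:
  assumes "\<sigma> permutes {1..n}" and "p \<in> perms_n n"
  shows "evenperm (perm_of_word (map \<sigma> p)) \<longleftrightarrow> (evenperm \<sigma> \<longleftrightarrow> evenperm (perm_of_word p))"
  unfolding perm_of_word_map[OF assms]
  by (rule evenperm_comp; rule permutes_imp_permutation[OF finite_atLeastAtMost])
    (use assms perm_of_word_permutes in auto)

lemma bij_betw_map_perms_n:
  assumes "\<sigma> permutes {1..n}"
  shows "bij_betw (map \<sigma>) (perms_n n) (perms_n n)"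
proof -
  have maps_to: "map \<tau> p \<in> perms_n n" if "\<tau> permutes {1..n}" "p \<in> perms_n n" for \<tau> p
    using that by (auto simp: perms_n_def distinct_map permutes_image permutes_inj_on inj_on_subset)
  show ?thesis
  proof (rule bij_betw_byWitness[where f' = "map (inv \<sigma>)"])
    show "\<forall>p\<in>perms_n n. map (inv \<sigma>) (map \<sigma> p) = p" "\<forall>p\<in>perms_n n. map \<sigma> (map (inv \<sigma>) p) = p"
      using permutes_inverses[OF assms] by (simp_all add: map_idI)
    show "map \<sigma> ` perms_n n \<subseteq> perms_n n" "map (inv \<sigma>) ` perms_n n \<subseteq> perms_n n"
      using maps_to assms permutes_inv[OF assms] by auto
  qed
qed

lemma card_eq_by_sign_reversing_bij:
  assumes "bij_betw f X X"
    and "\<And>x. x \<in> X \<Longrightarrow> P (f x) \<longleftrightarrow> P x"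
    and "\<And>x. x \<in> X \<Longrightarrow> Q (f x) \<longleftrightarrow> \<not> Q x"
  shows "card {x \<in> X. P x \<and> Q x} = card {x \<in> X. P x \<and> \<not> Q x}"
proof -
  let ?A = "{x \<in> X. P x \<and> Q x}" and ?B = "{x \<in> X. P x \<and> \<not> Q x}"
  have "inj_on f ?A"
    using assms(1) by (auto simp: bij_betw_def intro: inj_on_subset)
  moreover have "f ` ?A = ?B"
  proof
    show "f ` ?A \<subseteq> ?B"
      using assms by (auto simp: bij_betw_def)
    show "?B \<subseteq> f ` ?A"
    proof
      fix y assume y: "y \<in> ?B"
      then obtain x where "x \<in> X" "y = f x"
        using assms(1) by (auto simp: bij_betw_def)
      then show "y \<in> f ` ?A"
        using y assms(2,3) by auto
    qed
  qed
  ultimately show ?thesis by (metis card_image)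
qed

theorem theorem2p14:
  fixes c n :: nat
  assumes "odd c" and "c > 0" and "n > c" and "even n"
  shows "card {p \<in> perms_n n. non_avoider c p \<and> evenperm (perm_of_word p)}
       = card {p \<in> perms_n n. non_avoider c p \<and> \<not> evenperm (perm_of_word p)}"
proof (rule card_eq_by_sign_reversing_bij)
  have "n \<ge> 1" using assms(3) by simp
  then have \<sigma>: "shift_cycle n permutes {1..n}" and "\<not> evenperm (shift_cycle n)"
    using shift_cycle_permutes evenperm_shift_cycle assms(4) by auto
  show "bij_betw (map (shift_cycle n)) (perms_n n) (perms_n n)"
    using \<sigma> by (rule bij_betw_map_perms_n)
  show "non_avoider c (map (shift_cycle n) p) \<longleftrightarrow> non_avoider c p" if "p \<in> perms_n n" for p
    using that assms(2) by (rule non_avoider_map_shift_cycle_iff)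
  show "evenperm (perm_of_word (map (shift_cycle n) p)) \<longleftrightarrow> \<not> evenperm (perm_of_word p)"
    if "p \<in> perms_n n" for p
    using evenperm_perm_of_word_map[OF \<sigma> that] \<open>\<not> evenperm (shift_cycle n)\<close> by simp
qed

end
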